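(* Let $M,N$ be weight sequences with $m_k^{1/k}\to\infty$, $n_k^{1/k}\to\infty$ and $C:=\mathrm{mg}(M,N)<\infty$. Then $h_m(t)\le C^jn_jt^jh_n(Ct)$ for all $t>0$ and $j\in\mathbb{N}$, and $h_m(t)\le h_n\big(\tfrac{eC}{2}t\big)^2$ for all $t>0$.
   Context: A weight sequence is a sequence $M=(M_k)_{k\ge0}$ of positive reals with $M_k=\mu_1\cdots\mu_k$, $M_0=1$, where $(\mu_k)$ is positive and increasing with $\mu_0=1$, and $M_k^{1/k}\to\infty$; $m_k:=M_k/k!$, $n_k:=N_k/k!$. For a positive sequence $m$ with $m_0=1$ and $m_k^{1/k}\to\infty$, $h_m(t):=\inf_{k\in\mathbb{N}}m_kt^k$ for $t>0$. For positive sequences, $\mathrm{mg}(M,N):=\sup_{j,k\ge0,j+k\ge1}(M_{j+k}/(N_jN_k))^{1/(j+k)}\in(0,\infty]$. *)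

theory Defs
  imports "HOL-Analysis.Analysis"
begin

definition weight_sequence :: "(nat \<Rightarrow> real) \<Rightarrow> bool" where
  "weight_sequence M \<longleftrightarrow>
     (\<exists>\<mu> :: nat \<Rightarrow> real. (\<forall>k. 0 < \<mu> k) \<and> mono \<mu> \<and> \<mu> 0 = 1 \<and>
        (\<forall>k. M k = (\<Prod>i\<in>{1..k}. \<mu> i))) \<and>
     filterlim (\<lambda>k. M k powr (1 / real k)) at_top sequentially"

definition small_seq :: "(nat \<Rightarrow> real) \<Rightarrow> nat \<Rightarrow> real" where
  "small_seq M k = M k / fact k"

definition hfun :: "(nat \<Rightarrow> real) \<Rightarrow> real \<Rightarrow> real" where
  "hfun m t = (INF k. m k * t ^ k)"

definition mg :: "(nat \<Rightarrow> real) \<Rightarrow> (nat \<Rightarrow> real) \<Rightarrow> ereal" where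
  "mg M N = (SUP p \<in> {(j, k). 1 \<le> j + k}.
      ereal ((M (fst p + snd p) / (N (fst p) * N (snd p))) powr (1 / real (fst p + snd p))))"

end

theory Submission
  imports Defs
begin

text \<open>Finiteness of \<open>C = mg(M,N)\<close> means exactly \<open>M\<^sub>j\<^sub>+\<^sub>k \<le> C\<^bsup>j+k\<^esup> N\<^sub>j N\<^sub>k\<close>; since
  \<open>j! k! \<le> (j+k)!\<close> this passes to \<open>m\<^sub>j\<^sub>+\<^sub>k \<le> C\<^bsup>j+k\<^esup> n\<^sub>j n\<^sub>k\<close>. Bounding \<open>h\<^sub>m(t)\<close> by the term
  \<open>m\<^sub>j\<^sub>+\<^sub>k t\<^bsup>j+k\<^esup> \<le> C\<^sup>j n\<^sub>j t\<^sup>j \<cdot> n\<^sub>k (Ct)\<^sup>k\<close> and taking the infimum over \<open>k\<close> gives the first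
  estimate; the diagonal terms \<open>m\<^sub>2\<^sub>k t\<^bsup>2k\<^esup> \<le> (n\<^sub>k (Ct)\<^sup>k)\<^sup>2\<close> give \<open>h\<^sub>m(t) \<le> h\<^sub>n(Ct)\<^sup>2\<close>, and
  \<open>h\<^sub>n\<close> is nondecreasing with \<open>C \<le> eC/2\<close>.\<close>

lemma fact_mult_fact_le_fact: "(fact j :: 'a :: linordered_semidom) * fact k \<le> fact (j + k)"
proof -
  have "fact j * fact k \<le> (fact (j + k) :: nat)"
    by (rule dvd_imp_le) (simp_all add: fact_fact_dvd_fact)
  then show ?thesis
    by (metis of_nat_fact of_nat_le_iff of_nat_mult)
qed

lemma hfun_le:
  assumes "\<And>k. 0 \<le> m k" "0 \<le> t"
  shows "hfun m t \<le> m k * t ^ k"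
  unfolding hfun_def by (rule cINF_lower) (auto intro!: bdd_belowI[where m = 0] simp: assms)

lemma hfun_greatest:
  assumes "\<And>k. c \<le> m k * t ^ k"
  shows "c \<le> hfun m t"
  unfolding hfun_def by (rule cINF_greatest) (simp_all add: assms)

lemma hfun_nonneg:
  assumes "\<And>k. 0 \<le> m k" "0 \<le> t"
  shows "0 \<le> hfun m t"
  by (rule hfun_greatest) (simp add: assms)

lemma hfun_mono:
  assumes "\<And>k. 0 \<le> m k" "0 \<le> s" "s \<le> t"
  shows "hfun m s \<le> hfun m t"
proof (rule hfun_greatest)
  fix k
  have "hfun m s \<le> m k * s ^ k"
    using assms by (intro hfun_le)
  also have "\<dots> \<le> m k * t ^ k"
    using assms by (intro mult_left_mono power_mono)
  finally show "hfun m s \<le> m k * t ^ k" .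
qed

lemma hfun_le_shifted:
  assumes n: "\<And>k. 0 < n k" and m: "\<And>k. 0 \<le> m k" and "0 < C" "0 < t"
    and split: "\<And>j k. m (j + k) \<le> C ^ (j + k) * (n j * n k)"
  shows "hfun m t \<le> C ^ j * n j * t ^ j * hfun n (C * t)"
proof -
  define c where "c = C ^ j * n j * t ^ j"
  have "0 < c"
    using assms by (simp add: c_def)
  have "hfun m t / c \<le> n k * (C * t) ^ k" for k
  proof -
    have "hfun m t \<le> m (j + k) * t ^ (j + k)"
      using m \<open>0 < t\<close> by (intro hfun_le) auto
    also have "\<dots> \<le> C ^ (j + k) * (n j * n k) * t ^ (j + k)"
      using \<open>0 < t\<close> by (intro mult_right_mono split) auto
    also have "\<dots> = c * (n k * (C * t) ^ k)"
      by (simp add: c_def power_add power_mult_distrib)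
    finally show ?thesis
      using \<open>0 < c\<close> by (simp add: field_simps)
  qed
  then have "hfun m t / c \<le> hfun n (C * t)"
    by (rule hfun_greatest)
  then show ?thesis
    using \<open>0 < c\<close> by (simp add: c_def field_simps)
qed

lemma hfun_le_square:
  assumes n: "\<And>k. 0 < n k" and m: "\<And>k. 0 \<le> m k" and "0 < C" "0 < t"
    and split: "\<And>j k. m (j + k) \<le> C ^ (j + k) * (n j * n k)"
  shows "hfun m t \<le> hfun n (C * t) ^ 2"
proof -
  have "sqrt (hfun m t) \<le> n k * (C * t) ^ k" for k
  proof -
    have "hfun m t \<le> m (k + k) * t ^ (k + k)"
      using m \<open>0 < t\<close> by (intro hfun_le) auto
    also have "\<dots> \<le> C ^ (k + k) * (n k * n k) * t ^ (k + k)"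
      using \<open>0 < t\<close> by (intro mult_right_mono split) auto
    also have "\<dots> = (n k * (C * t) ^ k) ^ 2"
      by (simp add: power_add power_mult_distrib power2_eq_square)
    finally show ?thesis
      using n[of k] assms by (intro real_le_lsqrt) (auto intro!: mult_nonneg_nonneg simp: less_imp_le)
  qed
  then have "sqrt (hfun m t) \<le> hfun n (C * t)"
    by (rule hfun_greatest)
  then show ?thesis
    by (rule sqrt_le_D)
qed

lemma weight_sequence_pos: "weight_sequence M \<Longrightarrow> 0 < M k"
  unfolding weight_sequence_def by (auto intro!: prod_pos)

lemma weight_sequence_0: "weight_sequence M \<Longrightarrow> M 0 = 1"
  unfolding weight_sequence_def by auto

lemma small_seq_pos: "weight_sequence M \<Longrightarrow> 0 < small_seq M k"
  by (simp add: small_seq_def weight_sequence_pos)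

lemma mg_le_iff:
  "mg M N \<le> ereal C \<longleftrightarrow>
     (\<forall>j k. 1 \<le> j + k \<longrightarrow> (M (j + k) / (N j * N k)) powr (1 / real (j + k)) \<le> C)"
  unfolding mg_def by (auto simp: SUP_le_iff)

lemma mg_le_imp_pos:
  assumes "weight_sequence M" "weight_sequence N" "mg M N \<le> ereal C"
  shows "0 < C"
proof -
  have "(M 1 / (N 1 * N 0)) powr (1 / real 1) \<le> C"
    using assms(3) mg_le_iff[of M N C] by (metis add.right_neutral order_refl)
  moreover have "0 < (M 1 / (N 1 * N 0)) powr (1 / real 1)"
    using weight_sequence_pos[OF assms(1), of 1] weight_sequence_pos[OF assms(2)] by (simp add: abs_mult abs_of_pos)
  ultimately show ?thesis
    by linarith
qed

lemma mg_le_imp_weight_bound: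
  assumes "weight_sequence M" "weight_sequence N" "mg M N \<le> ereal C"
  shows "M (j + k) \<le> C ^ (j + k) * (N j * N k)"
proof (cases "j + k = 0")
  case True
  then show ?thesis
    using assms by (simp add: weight_sequence_0)
next
  case False
  define r where "r = M (j + k) / (N j * N k)"
  have "0 < r"
    using assms by (simp add: r_def weight_sequence_pos)
  have "r powr (1 / real (j + k)) \<le> C"
    using assms(3) False unfolding mg_le_iff r_def by auto
  then have "(r powr (1 / real (j + k))) ^ (j + k) \<le> C ^ (j + k)"
    by (intro power_mono) auto
  also have "(r powr (1 / real (j + k))) ^ (j + k) = r"
    using \<open>0 < r\<close> False by (auto simp: powr_realpow[symmetric] powr_powr)
  finally show ?thesis
    using assms by (simp add: r_def field_simps weight_sequence_pos)
qed

lemma mg_le_imp_small_seq_bound: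
  assumes "weight_sequence M" "weight_sequence N" "mg M N \<le> ereal C"
  shows "small_seq M (j + k) \<le> C ^ (j + k) * (small_seq N j * small_seq N k)"
proof -
  have "0 < C"
    using assms by (rule mg_le_imp_pos)
  have "small_seq M (j + k) \<le> C ^ (j + k) * (N j * N k) / fact (j + k)"
    unfolding small_seq_def using assms
    by (intro divide_right_mono mg_le_imp_weight_bound) auto
  also have "\<dots> \<le> C ^ (j + k) * (N j * N k) / (fact j * fact k)"
    using weight_sequence_pos[OF assms(2)] \<open>0 < C\<close>
    by (intro divide_left_mono fact_mult_fact_le_fact) (auto intro!: mult_nonneg_nonneg simp: less_imp_le)
  also have "\<dots> = C ^ (j + k) * (small_seq N j * small_seq N k)"
    by (simp add: small_seq_def)
  finally show ?thesis .
qed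

theorem lemma5p1:
  fixes M N :: "nat \<Rightarrow> real" and C :: real
  assumes "weight_sequence M" and "weight_sequence N"
    and "filterlim (\<lambda>k. small_seq M k powr (1 / real k)) at_top sequentially"
    and "filterlim (\<lambda>k. small_seq N k powr (1 / real k)) at_top sequentially"
    and "mg M N = ereal C"
  shows "(\<forall>t>0. \<forall>j::nat. hfun (small_seq M) t
            \<le> C ^ j * small_seq N j * t ^ j * hfun (small_seq N) (C * t))
       \<and> (\<forall>t>0. hfun (small_seq M) t \<le> (hfun (small_seq N) (exp 1 * C / 2 * t)) ^ 2)"
proof -
  have M: "weight_sequence M" and N: "weight_sequence N" and mg: "mg M N \<le> ereal C"
    using assms by simp_all
  have "0 < C"
    using M N mg by (rule mg_le_imp_pos)
  note m_nonneg = small_seq_pos[OF M, THEN less_imp_le] and n_pos = small_seq_pos[OF N]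
  note split = mg_le_imp_small_seq_bound[OF M N mg]
  have "C * t \<le> exp 1 * C / 2 * t" if "0 < t" for t
    using exp_ge_add_one_self[of 1] \<open>0 < C\<close> that by (simp add: mult_le_cancel_right1)
  then have "hfun (small_seq N) (C * t) ^ 2 \<le> hfun (small_seq N) (exp 1 * C / 2 * t) ^ 2"
    if "0 < t" for t
    using that \<open>0 < C\<close> n_pos
    by (intro power_mono hfun_mono hfun_nonneg) (auto simp: less_imp_le)
  then show ?thesis
    using hfun_le_shifted[OF n_pos m_nonneg \<open>0 < C\<close> _ split]
      hfun_le_square[OF n_pos m_nonneg \<open>0 < C\<close> _ split]
    by (meson order_trans)
qed

end
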